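(* For $i,j\in\{1,\dots,d\}$ and $y\in(-1,1)$ let $$z_{ij}(y)=\Big(\sum_{n_0,n_1\ge0}\exp\Big(-\tfrac12\big(Q_{i,n_0}^2+Q_{j,n_1}^2-2yQ_{i,n_0}Q_{j,n_1}\big)\Big)\Big)^{-1}.$$ Then the matrix $(-z_{ij}'(0))_{i,j=1}^d$ is positive semidefinite, and for each $i$, $$|z_{ii}'(0)|\le\frac{(m_i^{(1)}(1))^2}{(m_i^{(0)}(1))^4}.$$
   Context: For each $i$, $Q_{i,n}=\Phi^{-1}(P[X_{i,t}\le n])$ where $X_{i,t}$ is $\mathbb N_0$-valued and $\Phi$ is the standard normal CDF (summands with $Q=\pm\infty$ are $0$). $m_i^{(k)}(u)=\frac1{\sqrt{2\pi}}\sum_{n\ge0}e^{-Q_{i,n}^2/(2u)}|Q_{i,n}|^k$. It is assumed that the relevant series $m_i^{(k)}(u)$ ($k\le 2$, $u$ in a neighborhood of $1$) are finite and $m_i^{(0)}(1)>0$, so that $z_{ij}$ is differentiable and termwise differentiation is valid. *)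

theory Defs
  imports "HOL-Probability.Probability"
begin

definition Phi :: "real \<Rightarrow> real" where
  "Phi x = (LBINT t:{..x}. std_normal_density t)"

definition Phi_inv :: "real \<Rightarrow> real" where
  "Phi_inv p = (THE q. Phi q = p)"

text \<open>P i is the law of the N0-valued variable X_i (same for all t).
  F i n = P[X_i <= n].  Q_{i,n} is finite iff 0 < F i n < 1.\<close>
definition Fcdf :: "(nat \<Rightarrow> nat pmf) \<Rightarrow> nat \<Rightarrow> nat \<Rightarrow> real" where
  "Fcdf P i n = measure_pmf.prob (P i) {..n}"

definition Qfin :: "(nat \<Rightarrow> nat pmf) \<Rightarrow> nat \<Rightarrow> nat \<Rightarrow> bool" where
  "Qfin P i n \<longleftrightarrow> 0 < Fcdf P i n \<and> Fcdf P i n < 1"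

definition Qv :: "(nat \<Rightarrow> nat pmf) \<Rightarrow> nat \<Rightarrow> nat \<Rightarrow> real" where
  "Qv P i n = Phi_inv (Fcdf P i n)"

text \<open>Summand of m_i^{(k)}(u) (without the 1/sqrt(2 pi) factor); zero when Q is infinite.\<close>
definition mterm :: "(nat \<Rightarrow> nat pmf) \<Rightarrow> nat \<Rightarrow> real \<Rightarrow> nat \<Rightarrow> nat \<Rightarrow> real" where
  "mterm P k u i n = (if Qfin P i n then exp (- ((Qv P i n)^2) / (2*u)) * \<bar>Qv P i n\<bar>^k else 0)"

definition mfun :: "(nat \<Rightarrow> nat pmf) \<Rightarrow> nat \<Rightarrow> real \<Rightarrow> nat \<Rightarrow> real" where
  "mfun P k u i = (1 / sqrt (2*pi)) * (\<Sum>n. mterm P k u i n)"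

definition zfun :: "(nat \<Rightarrow> nat pmf) \<Rightarrow> nat \<Rightarrow> nat \<Rightarrow> real \<Rightarrow> real" where
  "zfun P i j y = inverse (\<Sum>\<^sub>\<infinity>(n0, n1)\<in>UNIV.
      (if Qfin P i n0 \<and> Qfin P j n1 then
         exp (- (1/2) * ((Qv P i n0)^2 + (Qv P j n1)^2 - 2 * y * Qv P i n0 * Qv P j n1))
       else 0))"

definition psd_matrix :: "nat \<Rightarrow> (nat \<Rightarrow> nat \<Rightarrow> real) \<Rightarrow> bool" where
  "psd_matrix d M \<longleftrightarrow> (\<forall>i\<in>{1..d}. \<forall>j\<in>{1..d}. M i j = M j i) \<and>
     (\<forall>c :: nat \<Rightarrow> real. 0 \<le> (\<Sum>i=1..d. \<Sum>j=1..d. c i * M i j * c j))"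

end

theory Submission
  imports Defs
begin

text \<open>
  With the Gaussian weights \<open>\<alpha>\<^sub>i(n) = exp (-Q\<^sub>i\<^sub>,\<^sub>n\<^sup>2/2) = mterm P 0 1 i n\<close>, the series inverted
  in \<open>z\<^sub>i\<^sub>j(y)\<close> is \<open>S(y) = \<Sum> \<alpha>\<^sub>i(n\<^sub>0) \<alpha>\<^sub>j(n\<^sub>1) exp (y Q\<^sub>i\<^sub>,\<^sub>n\<^sub>0 Q\<^sub>j\<^sub>,\<^sub>n\<^sub>1)\<close>.
  Since \<open>|exp t - 1 - t| \<le> t\<^sup>2 exp |t|\<close> and \<open>|y Q Q'| \<le> |y| (Q\<^sup>2 + Q'\<^sup>2) / 2\<close>, the remainder
  of the first-order expansion of \<open>S\<close> is \<open>O(y\<^sup>2)\<close> as soon as the slightly weaker weights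
  \<open>exp (-Q\<^sup>2/(2u))\<close>, \<open>u > 1\<close>, are summable, which is what the hypothesis provides.
  Hence \<open>S(0) = A\<^sub>i A\<^sub>j\<close> and \<open>S'(0) = B\<^sub>i B\<^sub>j\<close> with \<open>A\<^sub>i = \<Sum>\<^sub>n \<alpha>\<^sub>i(n)\<close> and \<open>B\<^sub>i = \<Sum>\<^sub>n \<alpha>\<^sub>i(n) Q\<^sub>i\<^sub>,\<^sub>n\<close>,
  so \<open>-z\<^sub>i\<^sub>j'(0) = v\<^sub>i v\<^sub>j\<close> with \<open>v\<^sub>i = B\<^sub>i / A\<^sub>i\<^sup>2\<close> is a rank-one positive semidefinite matrix,
  and \<open>|z\<^sub>i\<^sub>i'(0)| = B\<^sub>i\<^sup>2 / A\<^sub>i\<^sup>4\<close> with \<open>A\<^sub>i = \<surd>(2\<pi>) m\<^sub>i\<^sup>(\<^sup>0\<^sup>)(1)\<close> and \<open>|B\<^sub>i| \<le> \<surd>(2\<pi>) m\<^sub>i\<^sup>(\<^sup>1\<^sup>)(1)\<close>.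
\<close>

lemma abs_exp_minus_one_minus_le: "\<bar>exp t - 1 - t\<bar> \<le> t\<^sup>2 * exp \<bar>t\<bar>" for t :: real
proof -
  have lower: "1 + t \<le> exp t"
    by (rule exp_ge_add_one_self)
  have "1 - t \<le> exp (- t)"
    using exp_ge_add_one_self[of "- t"] by simp
  then have upper: "exp t - 1 \<le> t * exp t"
    using mult_left_mono[of "1 - t" "exp (- t)" "exp t"] by (simp add: exp_minus field_simps)
  have "exp t - 1 - t \<le> t\<^sup>2 * exp \<bar>t\<bar>"
  proof (cases "t \<ge> 0")
    case True
    have "exp t - 1 - t \<le> t * (exp t - 1)"
      using upper by (simp add: algebra_simps)
    also have "\<dots> \<le> t * (t * exp t)"
      using upper True by (rule mult_left_mono)
    finally show ?thesis
      using True by (simp add: power2_eq_square)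
  next
    case False
    have "exp t - 1 - t \<le> (- t) * (1 - exp t)"
      using upper by (simp add: algebra_simps)
    also have "\<dots> \<le> (- t) * (- t)"
      using lower False by (intro mult_left_mono) linarith+
    also have "\<dots> \<le> t\<^sup>2 * exp \<bar>t\<bar>"
      using mult_left_mono[of 1 "exp \<bar>t\<bar>" "t\<^sup>2"] by (simp add: power2_eq_square)
    finally show ?thesis .
  qed
  moreover have "0 \<le> exp t - 1 - t"
    using lower by linarith
  ultimately show ?thesis
    by simp
qed

lemma abs_exp_bilinear_remainder_le:
  fixes y s t \<delta> \<epsilon> :: real
  assumes "\<bar>y\<bar> \<le> 2 * \<delta>" and "\<bar>y\<bar> \<le> 2 * \<epsilon>"
  shows "\<bar>exp (y * s * t) - 1 - y * s * t\<bar> \<le> y\<^sup>2 * (s\<^sup>2 * exp (\<delta> * s\<^sup>2)) * (t\<^sup>2 * exp (\<epsilon> * t\<^sup>2))"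
proof -
  have "\<bar>y * s * t\<bar> \<le> \<bar>y\<bar> * ((s\<^sup>2 + t\<^sup>2) / 2)"
    using mult_left_mono[OF sum_squares_bound[of "\<bar>s\<bar>" "\<bar>t\<bar>"], of "\<bar>y\<bar>"] by (simp add: abs_mult)
  also have "\<dots> = \<bar>y\<bar> / 2 * s\<^sup>2 + \<bar>y\<bar> / 2 * t\<^sup>2"
    by (simp add: field_simps)
  also have "\<dots> \<le> \<delta> * s\<^sup>2 + \<epsilon> * t\<^sup>2"
    using assms by (intro add_mono mult_right_mono) auto
  finally have "exp \<bar>y * s * t\<bar> \<le> exp (\<delta> * s\<^sup>2) * exp (\<epsilon> * t\<^sup>2)"
    by (simp add: exp_add[symmetric])
  then have "(y * s * t)\<^sup>2 * exp \<bar>y * s * t\<bar> \<le> (y * s * t)\<^sup>2 * (exp (\<delta> * s\<^sup>2) * exp (\<epsilon> * t\<^sup>2))"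
    by (rule mult_left_mono) simp
  then show ?thesis
    using abs_exp_minus_one_minus_le[of "y * s * t"] by (simp add: power_mult_distrib mult_ac)
qed

lemma has_sum_product_real:
  fixes f :: "'a \<Rightarrow> real" and g :: "'b \<Rightarrow> real"
  assumes f: "f summable_on A" and g: "g summable_on B"
  shows "((\<lambda>(x, y). f x * g y) has_sum infsum f A * infsum g B) (A \<times> B)"
proof -
  have abs_f: "(\<lambda>x. \<bar>f x\<bar>) summable_on A" and abs_g: "(\<lambda>y. \<bar>g y\<bar>) summable_on B"
    using f g summable_on_iff_abs_summable_on_real by auto
  have "(\<lambda>p. norm ((\<lambda>(x, y). f x * g y) p)) summable_on Sigma A (\<lambda>_. B)"
  proof (rule Infinite_Sum.abs_summable_on_Sigma_iff[THEN iffD2], intro conjI ballI)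
    fix x
    show "(\<lambda>y. norm ((\<lambda>(x, y). f x * g y) (x, y))) summable_on B"
      using summable_on_cmult_right[OF abs_g, of "\<bar>f x\<bar>"] by (simp add: abs_mult)
  next
    have "(\<lambda>x. norm (\<Sum>\<^sub>\<infinity>y\<in>B. norm ((\<lambda>(x, y). f x * g y) (x, y)))) = (\<lambda>x. \<bar>f x\<bar> * (\<Sum>\<^sub>\<infinity>y\<in>B. \<bar>g y\<bar>))"
      by (simp add: abs_mult infsum_cmult_right' infsum_nonneg)
    then show "(\<lambda>x. norm (\<Sum>\<^sub>\<infinity>y\<in>B. norm ((\<lambda>(x, y). f x * g y) (x, y)))) summable_on A"
      using summable_on_cmult_left[OF abs_f] by simp
  qed
  then have "(\<lambda>(x, y). f x * g y) summable_on A \<times> B"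
    by (rule Infinite_Sum.abs_summable_summable)
  with infsum_Sigma_banach[OF this] show ?thesis
    by (simp add: has_sum_iff infsum_cmult_left' infsum_cmult_right')
qed

lemma has_real_derivative_at_0_of_quadratic_remainder:
  fixes f :: "real \<Rightarrow> real"
  assumes "r > 0" and remainder: "\<And>y. \<bar>y\<bar> < r \<Longrightarrow> \<bar>f y - f 0 - D * y\<bar> \<le> C * y\<^sup>2"
  shows "(f has_real_derivative D) (at 0)"
proof -
  have "((\<lambda>y. (f y - f 0) / y - D) \<longlongrightarrow> 0) (at 0)"
  proof (rule Lim_null_comparison)
    show "\<forall>\<^sub>F y in at 0. norm ((f y - f 0) / y - D) \<le> C * \<bar>y\<bar>"
      unfolding eventually_at
    proof (intro exI[of _ r] conjI \<open>r > 0\<close> ballI impI)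
      fix y :: real
      assume "y \<noteq> 0 \<and> dist y 0 < r"
      then have "y \<noteq> 0" and "\<bar>y\<bar> < r"
        by auto
      have "norm ((f y - f 0) / y - D) = \<bar>f y - f 0 - D * y\<bar> / \<bar>y\<bar>"
        using \<open>y \<noteq> 0\<close> by (simp add: field_simps flip: abs_divide)
      also have "\<dots> \<le> C * y\<^sup>2 / \<bar>y\<bar>"
        using remainder[OF \<open>\<bar>y\<bar> < r\<close>] by (rule divide_right_mono) simp
      also have "\<dots> = C * \<bar>y\<bar>"
        using \<open>y \<noteq> 0\<close> by (simp add: power2_eq_square field_simps)
      finally show "norm ((f y - f 0) / y - D) \<le> C * \<bar>y\<bar>" .
    qed
    show "((\<lambda>y. C * \<bar>y\<bar>) \<longlongrightarrow> 0) (at (0::real))"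
      by (auto intro!: tendsto_eq_intros)
  qed
  then show ?thesis
    by (simp add: has_field_derivative_iff LIM_zero_iff)
qed

lemma has_sum_exp_product_expansion:
  fixes \<alpha> a :: "'a \<Rightarrow> real" and \<beta> b :: "'b \<Rightarrow> real" and \<delta> \<epsilon> y :: real
  assumes \<alpha>: "\<alpha> summable_on UNIV" and \<alpha>a: "(\<lambda>m. \<alpha> m * a m) summable_on UNIV"
    and wa: "(\<lambda>m. \<alpha> m * ((a m)\<^sup>2 * exp (\<delta> * (a m)\<^sup>2))) summable_on UNIV"
    and \<beta>: "\<beta> summable_on UNIV" and \<beta>b: "(\<lambda>n. \<beta> n * b n) summable_on UNIV"
    and wb: "(\<lambda>n. \<beta> n * ((b n)\<^sup>2 * exp (\<epsilon> * (b n)\<^sup>2))) summable_on UNIV"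
    and y: "\<bar>y\<bar> \<le> 2 * \<delta>" "\<bar>y\<bar> \<le> 2 * \<epsilon>"
  obtains \<rho> where
    "((\<lambda>(m, n). \<alpha> m * \<beta> n * exp (y * a m * b n)) has_sum
        infsum \<alpha> UNIV * infsum \<beta> UNIV + y * ((\<Sum>\<^sub>\<infinity>m. \<alpha> m * a m) * (\<Sum>\<^sub>\<infinity>n. \<beta> n * b n)) + \<rho>) UNIV"
    and "\<bar>\<rho>\<bar> \<le> y\<^sup>2 * ((\<Sum>\<^sub>\<infinity>m. \<bar>\<alpha> m * ((a m)\<^sup>2 * exp (\<delta> * (a m)\<^sup>2))\<bar>) *
                      (\<Sum>\<^sub>\<infinity>n. \<bar>\<beta> n * ((b n)\<^sup>2 * exp (\<epsilon> * (b n)\<^sup>2))\<bar>))"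
proof -
  define W where "W = (\<lambda>(m, n). \<bar>\<alpha> m * ((a m)\<^sup>2 * exp (\<delta> * (a m)\<^sup>2))\<bar> *
                                 \<bar>\<beta> n * ((b n)\<^sup>2 * exp (\<epsilon> * (b n)\<^sup>2))\<bar>)"
  define R where "R = (\<lambda>(m, n). \<alpha> m * \<beta> n * (exp (y * a m * b n) - 1 - y * a m * b n))"
  have W: "(W has_sum (\<Sum>\<^sub>\<infinity>m. \<bar>\<alpha> m * ((a m)\<^sup>2 * exp (\<delta> * (a m)\<^sup>2))\<bar>) *
                     (\<Sum>\<^sub>\<infinity>n. \<bar>\<beta> n * ((b n)\<^sup>2 * exp (\<epsilon> * (b n)\<^sup>2))\<bar>)) UNIV"
    using has_sum_product_real[OF wa[THEN summable_on_iff_abs_summable_on_real[THEN iffD1]]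
                                 wb[THEN summable_on_iff_abs_summable_on_real[THEN iffD1]]]
    unfolding W_def by simp
  have R_le: "\<bar>R p\<bar> \<le> y\<^sup>2 * W p" for p
  proof (cases p)
    case (Pair m n)
    then show ?thesis
      using mult_left_mono[OF abs_exp_bilinear_remainder_le[OF y, of "a m" "b n"], of "\<bar>\<alpha> m * \<beta> n\<bar>"]
      by (simp add: R_def W_def abs_mult mult_ac)
  qed
  have yW: "(\<lambda>p. y\<^sup>2 * W p) summable_on UNIV"
    using W by (intro summable_on_cmult_right has_sum_imp_summable)
  have abs_R: "(\<lambda>p. norm (R p)) summable_on UNIV"
    by (rule summable_on_comparison_test[OF yW]) (simp_all add: R_le)
  then have R: "R summable_on UNIV"
    by (rule Infinite_Sum.abs_summable_summable)
  have "\<bar>infsum R UNIV\<bar> \<le> (\<Sum>\<^sub>\<infinity>p. norm (R p))"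
    using norm_infsum_bound[OF abs_R] by simp
  also have "\<dots> \<le> (\<Sum>\<^sub>\<infinity>p. y\<^sup>2 * W p)"
    using abs_R yW R_le by (intro infsum_mono) auto
  finally have "\<bar>infsum R UNIV\<bar> \<le> y\<^sup>2 * infsum W UNIV"
    by (simp add: infsum_cmult_right')
  moreover have "(\<lambda>(m, n). \<alpha> m * \<beta> n * exp (y * a m * b n)) =
                 (\<lambda>p. (\<lambda>(m, n). \<alpha> m * \<beta> n) p + y * (\<lambda>(m, n). (\<alpha> m * a m) * (\<beta> n * b n)) p + R p)"
    by (auto simp: R_def algebra_simps)
  moreover have "((\<lambda>p. (\<lambda>(m, n). \<alpha> m * \<beta> n) p + y * (\<lambda>(m, n). (\<alpha> m * a m) * (\<beta> n * b n)) p + R p)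
                    has_sum infsum \<alpha> UNIV * infsum \<beta> UNIV
                      + y * ((\<Sum>\<^sub>\<infinity>m. \<alpha> m * a m) * (\<Sum>\<^sub>\<infinity>n. \<beta> n * b n)) + infsum R UNIV) UNIV"
    by (intro has_sum_add has_sum_cmult_right has_sum_infsum R
          has_sum_product_real[OF \<alpha> \<beta>, unfolded UNIV_Times_UNIV]
          has_sum_product_real[OF \<alpha>a \<beta>b, unfolded UNIV_Times_UNIV])
  ultimately show ?thesis
    using that[of "infsum R UNIV"] infsumI[OF W] by simp
qed

lemma has_real_derivative_infsum_exp_product:
  fixes \<alpha> a :: "'a \<Rightarrow> real" and \<beta> b :: "'b \<Rightarrow> real" and \<delta> \<epsilon> :: real
  assumes "\<delta> > 0" and "\<epsilon> > 0"
    and \<alpha>: "\<alpha> summable_on UNIV" and \<alpha>a: "(\<lambda>m. \<alpha> m * a m) summable_on UNIV"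
    and wa: "(\<lambda>m. \<alpha> m * ((a m)\<^sup>2 * exp (\<delta> * (a m)\<^sup>2))) summable_on UNIV"
    and \<beta>: "\<beta> summable_on UNIV" and \<beta>b: "(\<lambda>n. \<beta> n * b n) summable_on UNIV"
    and wb: "(\<lambda>n. \<beta> n * ((b n)\<^sup>2 * exp (\<epsilon> * (b n)\<^sup>2))) summable_on UNIV"
  shows "((\<lambda>y. \<Sum>\<^sub>\<infinity>(m, n)\<in>UNIV. \<alpha> m * \<beta> n * exp (y * a m * b n)) has_real_derivative
           (\<Sum>\<^sub>\<infinity>m. \<alpha> m * a m) * (\<Sum>\<^sub>\<infinity>n. \<beta> n * b n)) (at 0)"
proof (rule has_real_derivative_at_0_of_quadratic_remainder)
  show "2 * min \<delta> \<epsilon> > 0"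
    using assms(1,2) by simp
  fix y :: real
  assume "\<bar>y\<bar> < 2 * min \<delta> \<epsilon>"
  then have y: "\<bar>y\<bar> \<le> 2 * \<delta>" "\<bar>y\<bar> \<le> 2 * \<epsilon>"
    by auto
  obtain \<rho> where expansion:
    "((\<lambda>(m, n). \<alpha> m * \<beta> n * exp (y * a m * b n)) has_sum
        infsum \<alpha> UNIV * infsum \<beta> UNIV + y * ((\<Sum>\<^sub>\<infinity>m. \<alpha> m * a m) * (\<Sum>\<^sub>\<infinity>n. \<beta> n * b n)) + \<rho>) UNIV"
    and \<rho>: "\<bar>\<rho>\<bar> \<le> y\<^sup>2 * ((\<Sum>\<^sub>\<infinity>m. \<bar>\<alpha> m * ((a m)\<^sup>2 * exp (\<delta> * (a m)\<^sup>2))\<bar>) *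
                           (\<Sum>\<^sub>\<infinity>n. \<bar>\<beta> n * ((b n)\<^sup>2 * exp (\<epsilon> * (b n)\<^sup>2))\<bar>))"
    by (rule has_sum_exp_product_expansion[OF \<alpha> \<alpha>a wa \<beta> \<beta>b wb y])
  have "(\<Sum>\<^sub>\<infinity>(m, n)\<in>UNIV. \<alpha> m * \<beta> n * exp (0 * a m * b n)) = infsum \<alpha> UNIV * infsum \<beta> UNIV"
    using infsumI[OF has_sum_product_real[OF \<alpha> \<beta>]] by simp
  with infsumI[OF expansion] \<rho>
  show "\<bar>(\<Sum>\<^sub>\<infinity>(m, n)\<in>UNIV. \<alpha> m * \<beta> n * exp (y * a m * b n))
          - (\<Sum>\<^sub>\<infinity>(m, n)\<in>UNIV. \<alpha> m * \<beta> n * exp (0 * a m * b n))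
          - (\<Sum>\<^sub>\<infinity>m. \<alpha> m * a m) * (\<Sum>\<^sub>\<infinity>n. \<beta> n * b n) * y\<bar>
        \<le> (\<Sum>\<^sub>\<infinity>m. \<bar>\<alpha> m * ((a m)\<^sup>2 * exp (\<delta> * (a m)\<^sup>2))\<bar>) *
           (\<Sum>\<^sub>\<infinity>n. \<bar>\<beta> n * ((b n)\<^sup>2 * exp (\<epsilon> * (b n)\<^sup>2))\<bar>) * y\<^sup>2"
    by (simp add: algebra_simps)
qed

definition mterms_summable_near_1 :: "(nat \<Rightarrow> nat pmf) \<Rightarrow> nat \<Rightarrow> bool" where
  "mterms_summable_near_1 P i \<longleftrightarrow>
     (\<exists>\<epsilon>>0. \<forall>u. \<bar>u - 1\<bar> < \<epsilon> \<longrightarrow> (\<forall>k\<le>2. summable (\<lambda>n. mterm P k u i n)))"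

definition gauss_mass :: "(nat \<Rightarrow> nat pmf) \<Rightarrow> nat \<Rightarrow> real" where
  "gauss_mass P i = (\<Sum>\<^sub>\<infinity>n. mterm P 0 1 i n)"

definition gauss_moment :: "(nat \<Rightarrow> nat pmf) \<Rightarrow> nat \<Rightarrow> real" where
  "gauss_moment P i = (\<Sum>\<^sub>\<infinity>n. mterm P 0 1 i n * Qv P i n)"

lemma mterm_nonneg: "0 \<le> mterm P k u i n"
  by (simp add: mterm_def)

lemma mfun_eq_infsum:
  assumes "summable (mterm P k u i)"
  shows "mfun P k u i = (\<Sum>\<^sub>\<infinity>n. mterm P k u i n) / sqrt (2 * pi)"
  using infsumI[OF sums_nonneg_imp_has_sum[OF summable_sums[OF assms] mterm_nonneg]]
  by (simp add: mfun_def)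

lemma summable_mterm_at_1:
  assumes "mterms_summable_near_1 P i" and "k \<le> 2"
  shows "summable (mterm P k 1 i)"
proof -
  from assms(1) obtain \<epsilon> where "\<epsilon> > 0"
    and "\<forall>u. \<bar>u - 1\<bar> < \<epsilon> \<longrightarrow> (\<forall>k\<le>2. summable (\<lambda>n. mterm P k u i n))"
    unfolding mterms_summable_near_1_def by blast
  then show ?thesis
    using assms(2) by simp
qed

lemma summable_on_mterm_at_1:
  assumes "mterms_summable_near_1 P i" and "k \<le> 2"
  shows "mterm P k 1 i summable_on UNIV"
  using summable_mterm_at_1[OF assms] mterm_nonneg by (rule summable_nonneg_imp_summable_on)

lemma abs_mterm_times_Qv: "\<bar>mterm P 0 1 i n * Qv P i n\<bar> = mterm P 1 1 i n"
  by (simp add: mterm_def abs_mult)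

lemma summable_on_mterm_times_Qv:
  assumes "mterms_summable_near_1 P i"
  shows "(\<lambda>n. mterm P 0 1 i n * Qv P i n) summable_on UNIV"
proof (rule summable_on_iff_abs_summable_on_real[THEN iffD2])
  show "(\<lambda>n. norm (mterm P 0 1 i n * Qv P i n)) summable_on UNIV"
    using summable_on_mterm_at_1[OF assms one_le_numeral] by (simp add: abs_mterm_times_Qv)
qed

lemma summable_on_mterm_times_Qv_square_exp:
  assumes "mterms_summable_near_1 P i"
  obtains \<delta> where "\<delta> > 0"
    and "(\<lambda>n. mterm P 0 1 i n * ((Qv P i n)\<^sup>2 * exp (\<delta> * (Qv P i n)\<^sup>2))) summable_on UNIV"
proof -
  from assms obtain \<epsilon> where "\<epsilon> > 0"
    and summable: "\<forall>u. \<bar>u - 1\<bar> < \<epsilon> \<longrightarrow> (\<forall>k\<le>2. summable (\<lambda>n. mterm P k u i n))"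
    unfolding mterms_summable_near_1_def by blast
  define u where "u = 1 + \<epsilon> / 2"
  have "u > 1" and "summable (mterm P 2 u i)"
    using \<open>\<epsilon> > 0\<close> summable by (simp_all add: u_def)
  from this(2) mterm_nonneg have "mterm P 2 u i summable_on UNIV"
    by (rule summable_nonneg_imp_summable_on)
  moreover have "mterm P 0 1 i n * ((Qv P i n)\<^sup>2 * exp ((1 - 1 / u) / 2 * (Qv P i n)\<^sup>2)) = mterm P 2 u i n" for n
  proof -
    have "- (Qv P i n)\<^sup>2 / 2 + (1 - 1 / u) / 2 * (Qv P i n)\<^sup>2 = - (Qv P i n)\<^sup>2 / (2 * u)"
      using \<open>u > 1\<close> by (simp add: field_simps)
    then show ?thesis
      by (simp add: mterm_def mult_ac flip: exp_add)
  qed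
  ultimately show ?thesis
    using that[of "(1 - 1 / u) / 2"] \<open>u > 1\<close> by simp
qed

lemma zfun_eq_inverse_infsum_exp:
  "zfun P i j y =
     inverse (\<Sum>\<^sub>\<infinity>(m, n)\<in>UNIV. mterm P 0 1 i m * mterm P 0 1 j n * exp (y * Qv P i m * Qv P j n))"
proof -
  have kernel: "exp (- (1/2) * (a\<^sup>2 + b\<^sup>2 - 2 * y * a * b)) =
                 exp (- a\<^sup>2 / 2) * exp (- b\<^sup>2 / 2) * exp (y * a * b)" for a b :: real
    by (simp add: field_simps flip: exp_add)
  show ?thesis
    unfolding zfun_def
  proof (intro arg_cong[where f = inverse] infsum_cong, clarify)
    fix m n
    show "(if Qfin P i m \<and> Qfin P j n then
             exp (- (1/2) * ((Qv P i m)\<^sup>2 + (Qv P j n)\<^sup>2 - 2 * y * Qv P i m * Qv P j n)) else 0) =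
          mterm P 0 1 i m * mterm P 0 1 j n * exp (y * Qv P i m * Qv P j n)"
      using kernel[of "Qv P i m" "Qv P j n"] by (simp add: mterm_def)
  qed
qed

lemma has_real_derivative_zfun:
  assumes i: "mterms_summable_near_1 P i" and "gauss_mass P i \<noteq> 0"
    and j: "mterms_summable_near_1 P j" and "gauss_mass P j \<noteq> 0"
  shows "(zfun P i j has_real_derivative
           - (gauss_moment P i * gauss_moment P j) / (gauss_mass P i * gauss_mass P j)\<^sup>2) (at 0)"
proof -
  define S where
    "S y = (\<Sum>\<^sub>\<infinity>(m, n)\<in>UNIV. mterm P 0 1 i m * mterm P 0 1 j n * exp (y * Qv P i m * Qv P j n))" for y
  obtain \<delta> where "\<delta> > 0"
    and wi: "(\<lambda>n. mterm P 0 1 i n * ((Qv P i n)\<^sup>2 * exp (\<delta> * (Qv P i n)\<^sup>2))) summable_on UNIV"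
    by (rule summable_on_mterm_times_Qv_square_exp[OF i])
  obtain \<epsilon> where "\<epsilon> > 0"
    and wj: "(\<lambda>n. mterm P 0 1 j n * ((Qv P j n)\<^sup>2 * exp (\<epsilon> * (Qv P j n)\<^sup>2))) summable_on UNIV"
    by (rule summable_on_mterm_times_Qv_square_exp[OF j])
  have DS: "(S has_real_derivative gauss_moment P i * gauss_moment P j) (at 0)"
    unfolding S_def[abs_def] gauss_moment_def
    by (rule has_real_derivative_infsum_exp_product[OF \<open>\<delta> > 0\<close> \<open>\<epsilon> > 0\<close>
          summable_on_mterm_at_1[OF i le0] summable_on_mterm_times_Qv[OF i] wi
          summable_on_mterm_at_1[OF j le0] summable_on_mterm_times_Qv[OF j] wj])
  have S0: "S 0 = gauss_mass P i * gauss_mass P j"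
    using has_sum_product_real[OF summable_on_mterm_at_1[OF i le0] summable_on_mterm_at_1[OF j le0]]
    by (simp add: S_def gauss_mass_def infsumI)
  have "((\<lambda>y. inverse (S y)) has_real_derivative
          - (gauss_moment P i * gauss_moment P j) / (gauss_mass P i * gauss_mass P j)\<^sup>2) (at 0)"
    using DERIV_inverse_fun[OF DS] S0 assms(2,4) by (simp add: divide_inverse power2_eq_square)
  moreover have "zfun P i j = (\<lambda>y. inverse (S y))"
    by (simp add: fun_eq_iff S_def zfun_eq_inverse_infsum_exp)
  ultimately show ?thesis
    by simp
qed

lemma psd_matrix_outer_product:
  assumes "\<And>i j. i \<in> {1..d} \<Longrightarrow> j \<in> {1..d} \<Longrightarrow> M i j = v i * v j"
  shows "psd_matrix d M"
  unfolding psd_matrix_def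
proof (intro conjI ballI allI)
  fix i j
  assume "i \<in> {1..d}" "j \<in> {1..d}"
  then show "M i j = M j i"
    using assms by simp
next
  fix c :: "nat \<Rightarrow> real"
  have "(\<Sum>i=1..d. \<Sum>j=1..d. c i * M i j * c j) = (\<Sum>i=1..d. c i * v i) * (\<Sum>j=1..d. c j * v j)"
    using assms by (simp add: sum_product mult_ac)
  then show "0 \<le> (\<Sum>i=1..d. \<Sum>j=1..d. c i * M i j * c j)"
    by simp
qed

lemma abs_gauss_moment_le:
  assumes "mterms_summable_near_1 P i"
  shows "\<bar>gauss_moment P i\<bar> \<le> sqrt (2 * pi) * mfun P 1 1 i"
proof -
  have "(\<lambda>n. \<bar>mterm P 0 1 i n * Qv P i n\<bar>) summable_on UNIV"
    using summable_on_mterm_at_1[OF assms one_le_numeral] by (simp add: abs_mterm_times_Qv)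
  then have "\<bar>gauss_moment P i\<bar> \<le> (\<Sum>\<^sub>\<infinity>n. \<bar>mterm P 0 1 i n * Qv P i n\<bar>)"
    using norm_infsum_bound[of "\<lambda>n. mterm P 0 1 i n * Qv P i n" UNIV] by (simp add: gauss_moment_def)
  also have "\<dots> = (\<Sum>\<^sub>\<infinity>n. mterm P 1 1 i n)"
    by (simp only: abs_mterm_times_Qv)
  also have "\<dots> = sqrt (2 * pi) * mfun P 1 1 i"
    using mfun_eq_infsum[OF summable_mterm_at_1[OF assms one_le_numeral]] by simp
  finally show ?thesis .
qed

lemma mfun_0_1_eq_gauss_mass:
  assumes "mterms_summable_near_1 P i"
  shows "mfun P 0 1 i = gauss_mass P i / sqrt (2 * pi)"
  using mfun_eq_infsum[OF summable_mterm_at_1[OF assms le0]] by (simp add: gauss_mass_def)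

lemma abs_deriv_zfun_diag_le:
  assumes "mterms_summable_near_1 P i" and "mfun P 0 1 i > 0"
  shows "\<bar>deriv (zfun P i i) 0\<bar> \<le> (mfun P 1 1 i)\<^sup>2 / (mfun P 0 1 i)^4"
proof -
  define s where "s = sqrt (2 * pi)"
  have "s > 0" and "s\<^sup>2 \<ge> 1"
    using pi_gt3 by (auto simp: s_def)
  have "gauss_mass P i = s * mfun P 0 1 i"
    using mfun_0_1_eq_gauss_mass[OF assms(1)] \<open>s > 0\<close> by (simp add: s_def)
  then have "deriv (zfun P i i) 0 = - (gauss_moment P i)\<^sup>2 / (s * mfun P 0 1 i)^4"
    using DERIV_imp_deriv[OF has_real_derivative_zfun[OF assms(1) _ assms(1)]] assms(2) \<open>s > 0\<close>
    by (simp add: power2_eq_square power4_eq_xxxx)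
  also have "\<bar>\<dots>\<bar> \<le> (s * mfun P 1 1 i)\<^sup>2 / (s * mfun P 0 1 i)^4"
    using abs_gauss_moment_le[OF assms(1)] power_mono[of "\<bar>gauss_moment P i\<bar>" _ 2]
    by (simp add: divide_right_mono s_def)
  also have "\<dots> = (mfun P 1 1 i)\<^sup>2 / (mfun P 0 1 i)^4 / s\<^sup>2"
    using \<open>s > 0\<close> by (simp add: field_simps power2_eq_square power4_eq_xxxx)
  also have "\<dots> \<le> (mfun P 1 1 i)\<^sup>2 / (mfun P 0 1 i)^4"
    using divide_left_mono[OF \<open>s\<^sup>2 \<ge> 1\<close>, of "(mfun P 1 1 i)\<^sup>2 / (mfun P 0 1 i)^4"] \<open>s > 0\<close>
    by simp
  finally show ?thesis .
qed

theorem mainTheorem10: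
  fixes P :: "nat \<Rightarrow> nat pmf" and d :: nat
  assumes summ: "\<forall>i\<in>{1..d}. \<exists>\<epsilon>>0. \<forall>u. \<bar>u - 1\<bar> < \<epsilon> \<longrightarrow>
                   (\<forall>k\<le>2. summable (\<lambda>n. mterm P k u i n))"
    and pos: "\<forall>i\<in>{1..d}. mfun P 0 1 i > 0"
  shows "psd_matrix d (\<lambda>i j. - deriv (zfun P i j) 0) \<and>
         (\<forall>i\<in>{1..d}. \<bar>deriv (zfun P i i) 0\<bar> \<le> (mfun P 1 1 i)^2 / (mfun P 0 1 i)^4)"
proof -
  have summable: "mterms_summable_near_1 P i" if "i \<in> {1..d}" for i
    using summ that unfolding mterms_summable_near_1_def by blast
  have mass: "gauss_mass P i \<noteq> 0" if "i \<in> {1..d}" for i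
    using bspec[OF pos that] mfun_0_1_eq_gauss_mass[OF summable[OF that]] by auto
  define v where "v i = gauss_moment P i / (gauss_mass P i)\<^sup>2" for i
  have "- deriv (zfun P i j) 0 = v i * v j" if "i \<in> {1..d}" and "j \<in> {1..d}" for i j
    using DERIV_imp_deriv[OF has_real_derivative_zfun[OF summable[OF that(1)] mass[OF that(1)]
                                                      summable[OF that(2)] mass[OF that(2)]]]
    by (simp add: v_def power_mult_distrib)
  then have "psd_matrix d (\<lambda>i j. - deriv (zfun P i j) 0)"
    by (rule psd_matrix_outer_product)
  moreover have "\<bar>deriv (zfun P i i) 0\<bar> \<le> (mfun P 1 1 i)^2 / (mfun P 0 1 i)^4" if "i \<in> {1..d}" for i
    using abs_deriv_zfun_diag_le[OF summable[OF that]] pos that by blast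
  ultimately show ?thesis
    by blast
qed

end
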